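(* Let $D$ be a non-commutative division ring with center $F$. If $M$ is a non-abelian locally solvable maximal subgroup of $D^*$, then $M$ contains a unique maximal abelian normal subgroup.
   Context: $D^*$ is the multiplicative group of $D$; maximal subgroup = proper subgroup maximal among proper subgroups. Locally solvable: every finitely generated subgroup solvable. A maximal abelian normal subgroup of $M$ is an abelian normal subgroup of $M$ not properly contained in another abelian normal subgroup of $M$. *)

theory Defs
  imports "HOL-Algebra.Solvable_Groups"
begin

definition mult_units :: "('a::division_ring) monoid" where
  "mult_units = \<lparr>carrier = {x. x \<noteq> 0}, mult = (\<lambda>x y. x * y), one = 1\<rparr>"

definition maximal_subgroup :: "('a, 'b) monoid_scheme \<Rightarrow> 'a set \<Rightarrow> bool" where
  "maximal_subgroup G M \<longleftrightarrow> subgroup M G \<and> M \<noteq> carrier G \<and>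
     (\<forall>H. subgroup H G \<and> M \<subseteq> H \<longrightarrow> H = M \<or> H = carrier G)"

definition abelian_set :: "('a, 'b) monoid_scheme \<Rightarrow> 'a set \<Rightarrow> bool" where
  "abelian_set G N \<longleftrightarrow> (\<forall>x\<in>N. \<forall>y\<in>N. x \<otimes>\<^bsub>G\<^esub> y = y \<otimes>\<^bsub>G\<^esub> x)"

definition locally_solvable :: "('a, 'b) monoid_scheme \<Rightarrow> 'a set \<Rightarrow> bool" where
  "locally_solvable G M \<longleftrightarrow>
     (\<forall>S. finite S \<and> S \<subseteq> M \<longrightarrow> solvable (subgroup_generated G S))"

definition maximal_abelian_normal :: "('a, 'b) monoid_scheme \<Rightarrow> 'a set \<Rightarrow> 'a set \<Rightarrow> bool" where
  "maximal_abelian_normal G M N \<longleftrightarrow>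
     N \<lhd> G\<lparr>carrier := M\<rparr> \<and> abelian_set G N \<and>
     (\<forall>N'. N' \<lhd> G\<lparr>carrier := M\<rparr> \<and> abelian_set G N' \<and> N \<subseteq> N' \<longrightarrow> N' = N)"

end

theory Submission
  imports Defs "HOL-Library.Set_Algebras"
begin

text \<open>
  If \<open>x\<close> and \<open>x + 1\<close> both normalize an abelian subgroup \<open>B\<close> of \<open>D\<^sup>*\<close>, then \<open>x\<close> centralizes
  \<open>B\<close>: for \<open>y \<in> B\<close> the conjugates \<open>x y x\<inverse>\<close> and \<open>(x + 1) y (x + 1)\<inverse>\<close> lie in \<open>B\<close>, and
  \<open>x\<close> can be solved for in terms of them and \<open>y\<close>, so it commutes with \<open>y\<close>.
  Let \<open>A\<close> be a maximal abelian normal subgroup of the maximal subgroup \<open>M\<close>. The nonzero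
  elements \<open>K\<close> of the double centralizer of \<open>A\<close> form an abelian group normalized by \<open>M\<close>, so
  \<open>K M\<close> is a subgroup containing \<open>M\<close>. If \<open>K M = M\<close>, maximality gives \<open>A = K\<close>, so \<open>x + 1\<close> lies
  in \<open>A \<union> {0}\<close> for \<open>x \<in> A\<close>, and \<open>A\<close> centralizes every abelian normal subgroup \<open>B\<close> of \<open>M\<close>.
  If \<open>K M = D\<^sup>*\<close>, then \<open>A\<close> is normal in \<open>D\<^sup>*\<close> and hence central. Either way \<open>A B\<close> is abelian
  normal, so two maximal ones satisfy \<open>A = A B = B\<close>; existence is Zorn's lemma.
\<close>

definition mult_subgroup :: "'a::division_ring set \<Rightarrow> bool" where
  "mult_subgroup H \<longleftrightarrow> 0 \<notin> H \<and> 1 \<in> H \<and> (\<forall>x\<in>H. \<forall>y\<in>H. x * y \<in> H) \<and> (\<forall>x\<in>H. inverse x \<in> H)"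

definition normalizes :: "'a::division_ring set \<Rightarrow> 'a set \<Rightarrow> bool" where
  "normalizes M N \<longleftrightarrow> (\<forall>m\<in>M. \<forall>x\<in>N. m * x * inverse m \<in> N)"

definition commutant :: "'a::semigroup_mult set \<Rightarrow> 'a set" where
  "commutant S = {w. \<forall>a\<in>S. w * a = a * w}"

definition abelian_normal :: "'a::division_ring set \<Rightarrow> 'a set \<Rightarrow> bool" where
  "abelian_normal M N \<longleftrightarrow> mult_subgroup N \<and> N \<subseteq> M \<and> normalizes M N \<and> N \<subseteq> commutant N"

subsection \<open>The group of units\<close>

lemma mult_units_simps [simp]:
  "carrier mult_units = {x :: 'a::division_ring. x \<noteq> 0}"
  "x \<otimes>\<^bsub>mult_units\<^esub> y = x * y"
  "\<one>\<^bsub>mult_units\<^esub> = 1"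
  by (simp_all add: mult_units_def)

lemma group_mult_units: "group (mult_units :: 'a::division_ring monoid)"
proof (rule groupI)
  fix x :: 'a
  assume "x \<in> carrier mult_units"
  then show "\<exists>y\<in>carrier mult_units. y \<otimes>\<^bsub>mult_units\<^esub> x = \<one>\<^bsub>mult_units\<^esub>"
    by (intro bexI[of _ "inverse x"]) (auto simp: mult_units_def)
qed (auto simp: mult_units_def mult.assoc)

lemma inv_mult_units: "x \<noteq> 0 \<Longrightarrow> inv\<^bsub>mult_units\<^esub> x = inverse (x :: 'a::division_ring)"
  by (rule group.inv_equality[OF group_mult_units]) (auto simp: mult_units_def)

lemma subgroup_mult_units_iff: "subgroup H mult_units \<longleftrightarrow> mult_subgroup (H :: 'a::division_ring set)"
proof
  assume H: "subgroup H mult_units"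
  have nonzero: "H \<subseteq> {x. x \<noteq> 0}"
    using subgroup.subset[OF H] by simp
  have "inverse x \<in> H" if "x \<in> H" for x
    using subgroup.m_inv_closed[OF H that] inv_mult_units[of x] that nonzero by auto
  with nonzero subgroup.one_closed[OF H] subgroup.m_closed[OF H] show "mult_subgroup H"
    unfolding mult_subgroup_def by auto
next
  assume "mult_subgroup H"
  then show "subgroup H mult_units"
    by (intro subgroup.intro) (auto simp: mult_subgroup_def, metis inv_mult_units)
qed

lemma normal_restrict_mult_units_iff:
  fixes M N :: "'a::division_ring set"
  assumes M: "mult_subgroup M"
  shows "N \<lhd> mult_units\<lparr>carrier := M\<rparr> \<longleftrightarrow> mult_subgroup N \<and> N \<subseteq> M \<and> normalizes M N"
proof -
  have sub: "subgroup M mult_units"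
    using M by (simp add: subgroup_mult_units_iff)
  then have inv: "inv\<^bsub>mult_units\<lparr>carrier := M\<rparr>\<^esub> m = inverse m" if "m \<in> M" for m :: 'a
    using that M group.m_inv_consistent[OF group_mult_units] inv_mult_units
    by (metis mult_subgroup_def)
  have "subgroup N (mult_units\<lparr>carrier := M\<rparr>) \<longleftrightarrow> subgroup N mult_units \<and> N \<subseteq> M"
    using group.incl_subgroup[OF group_mult_units sub] group.subgroup_incl[OF group_mult_units _ sub]
      subgroup.subset[of N "mult_units\<lparr>carrier := M\<rparr>"]
    by auto
  then show ?thesis
    unfolding group.normal_inv_iff[OF subgroup.subgroup_is_group[OF sub group_mult_units]]
    by (auto simp: subgroup_mult_units_iff normalizes_def inv)
qed

lemma abelian_set_mult_units_iff: "abelian_set mult_units N \<longleftrightarrow> N \<subseteq> commutant (N :: 'a::division_ring set)"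
  by (auto simp: abelian_set_def commutant_def)

lemma maximal_abelian_normal_mult_units_iff:
  assumes "mult_subgroup (M :: 'a::division_ring set)"
  shows "maximal_abelian_normal mult_units M A \<longleftrightarrow>
    abelian_normal M A \<and> (\<forall>N. abelian_normal M N \<and> A \<subseteq> N \<longrightarrow> N = A)"
  using assms
  by (simp add: maximal_abelian_normal_def normal_restrict_mult_units_iff abelian_normal_def
      abelian_set_mult_units_iff)

lemma maximal_subgroup_mult_units_cases:
  assumes "maximal_subgroup mult_units M" "mult_subgroup H" "M \<subseteq> (H :: 'a::division_ring set)"
  shows "H = M \<or> H = {x. x \<noteq> 0}"
  using assms by (simp add: maximal_subgroup_def subgroup_mult_units_iff)

subsection \<open>Commutants\<close>

lemma commutant_iff: "w \<in> commutant S \<longleftrightarrow> (\<forall>a\<in>S. w * a = a * w)"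
  by (simp add: commutant_def)

lemma subset_commutant_iff: "A \<subseteq> commutant B \<longleftrightarrow> B \<subseteq> commutant A"
  by (auto simp: commutant_def)

lemma commutant_Un: "commutant (A \<union> B) = commutant A \<inter> commutant B"
  by (auto simp: commutant_def)

lemma commutant_antimono: "S \<subseteq> T \<Longrightarrow> commutant T \<subseteq> commutant S"
  by (auto simp: commutant_def)

lemma zero_mem_commutant [simp]: "(0 :: 'a::ring) \<in> commutant S"
  by (simp add: commutant_def)

lemma one_mem_commutant [simp]: "(1 :: 'a::ring_1) \<in> commutant S"
  by (simp add: commutant_def)

lemma add_mem_commutant: "x \<in> commutant S \<Longrightarrow> y \<in> commutant S \<Longrightarrow> x + y \<in> commutant (S :: 'a::ring set)"
  and diff_mem_commutant: "x \<in> commutant S \<Longrightarrow> y \<in> commutant S \<Longrightarrow> x - y \<in> commutant (S :: 'a::ring set)"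
  by (simp_all add: commutant_def algebra_simps)

lemma mult_mem_commutant: "x \<in> commutant S \<Longrightarrow> y \<in> commutant S \<Longrightarrow> x * y \<in> commutant S"
  by (simp add: commutant_def mult.assoc) (metis mult.assoc)

lemma inverse_mem_commutant:
  assumes "x \<in> commutant S"
  shows "inverse x \<in> commutant (S :: 'a::division_ring set)"
  unfolding commutant_iff
proof
  fix a assume "a \<in> S"
  with assms have "x * a = a * x"
    by (simp add: commutant_def)
  show "inverse x * a = a * inverse x"
  proof (cases "x = 0")
    case False
    have "inverse x * a = inverse x * (a * x) * inverse x"
      using False by (simp add: mult.assoc)
    also have "\<dots> = a * inverse x"
      using False \<open>x * a = a * x\<close> by (metis mult.assoc mult.left_neutral left_inverse)
    finally show ?thesis .
  qed simp
qed

lemma subset_bicommutant: "S \<subseteq> commutant (commutant S)"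
  by (auto simp: commutant_def)

lemma commutative_bicommutant:
  "S \<subseteq> commutant S \<Longrightarrow> commutant (commutant S) \<subseteq> commutant (commutant (commutant S))"
  by (simp add: commutant_antimono)

lemma set_times_subset_commutant:
  "A \<subseteq> commutant S \<Longrightarrow> B \<subseteq> commutant S \<Longrightarrow> A * B \<subseteq> commutant S"
  by (auto elim!: set_times_elim intro: mult_mem_commutant)

lemma mult_subgroup_commutant: "mult_subgroup (commutant S - {0 :: 'a::division_ring})"
  by (simp add: mult_subgroup_def mult_mem_commutant inverse_mem_commutant)

lemma mem_commutant_if_conjugates_commute:
  fixes x y :: "'a::division_ring"
  assumes conj: "x * y * inverse x \<in> commutant {y}"
    and conj_succ: "(x + 1) * y * inverse (x + 1) \<in> commutant {y}"
  shows "x \<in> commutant {y}"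
proof -
  consider "x = 0" | "x + 1 = 0" | "x \<noteq> 0" "x + 1 \<noteq> 0"
    by blast
  then show ?thesis
  proof cases
    case 2
    then have "x = - 1"
      by (simp add: eq_neg_iff_add_eq_0)
    then show ?thesis
      by (simp add: commutant_def)
  next
    case 3
    define b c where "b = x * y * inverse x" and "c = (x + 1) * y * inverse (x + 1)"
    have "b * x = x * y" "c * (x + 1) = (x + 1) * y"
      using 3 by (simp_all add: b_def c_def mult.assoc)
    then have eq: "(c - b) * x = y - c"
      by (simp add: algebra_simps)
    show ?thesis
    proof (cases "b = c")
      case True
      with eq \<open>b * x = x * y\<close> show ?thesis
        by (simp add: commutant_def)
    next
      case False
      then have "x = inverse (c - b) * (y - c)"
        using eq by (metis diff_eq_diff_eq diff_self left_inverse mult.assoc mult_1)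
      moreover have "y \<in> commutant {y}" "b \<in> commutant {y}" "c \<in> commutant {y}"
        using conj conj_succ by (simp_all add: b_def c_def commutant_def)
      ultimately show ?thesis
        by (simp add: mult_mem_commutant inverse_mem_commutant diff_mem_commutant)
    qed
  qed simp
qed

text \<open>Admitting \<open>0\<close> (conjugation by \<open>0\<close> yields \<open>0\<close>, as \<open>inverse 0 = 0\<close>) covers \<open>x = 0\<close> and \<open>x = -1\<close>.\<close>

lemma mem_commutant_if_normalizes:
  fixes B M :: "'a::division_ring set"
  assumes "B \<subseteq> commutant B" "normalizes M B" "x \<in> insert 0 M" "x + 1 \<in> insert 0 M"
  shows "x \<in> commutant B"
proof -
  have conj: "z * y * inverse z \<in> commutant {y}" if "z \<in> insert 0 M" "y \<in> B" for y z
    using that assms(1,2) by (auto simp: normalizes_def commutant_def)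
  show ?thesis
    using mem_commutant_if_conjugates_commute[OF conj conj] assms(3,4)
    by (auto simp: commutant_def)
qed

subsection \<open>Products of subgroups\<close>

lemma mult_subgroup_set_times:
  fixes A B :: "'a::division_ring set"
  assumes A: "mult_subgroup A" and B: "mult_subgroup B" and "normalizes B A"
  shows "mult_subgroup (A * B)"
  unfolding mult_subgroup_def
proof (intro conjI ballI)
  show "0 \<notin> A * B"
    using A B by (auto simp: mult_subgroup_def elim!: set_times_elim)
  show "1 \<in> A * B"
    using A B set_times_intro[of 1 A 1 B] by (simp add: mult_subgroup_def)
next
  fix x y assume "x \<in> A * B" "y \<in> A * B"
  then obtain a b a' b' where x: "x = a * b" "a \<in> A" "b \<in> B" and y: "y = a' * b'" "a' \<in> A" "b' \<in> B"
    by (auto elim!: set_times_elim)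
  have "b \<noteq> 0"
    using B x by (auto simp: mult_subgroup_def)
  then have "x * y = (a * (b * a' * inverse b)) * (b * b')"
    by (simp add: x y mult.assoc) (simp add: mult.assoc[symmetric])
  moreover have "a * (b * a' * inverse b) \<in> A" "b * b' \<in> B"
    using A B \<open>normalizes B A\<close> x y by (auto simp: mult_subgroup_def normalizes_def)
  ultimately show "x * y \<in> A * B"
    by auto
next
  fix x assume "x \<in> A * B"
  then obtain a b where x: "x = a * b" "a \<in> A" "b \<in> B"
    by (auto elim!: set_times_elim)
  have "a \<noteq> 0" "b \<noteq> 0"
    using A B x by (auto simp: mult_subgroup_def)
  then have x_inv: "inverse x = (inverse b * inverse a * b) * inverse b"
    by (simp add: x nonzero_inverse_mult_distrib mult.assoc)
  have "inverse a \<in> A" "inverse b \<in> B"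
    using A B x by (simp_all add: mult_subgroup_def)
  moreover from this have "inverse b * inverse a * inverse (inverse b) \<in> A"
    using \<open>normalizes B A\<close> by (simp only: normalizes_def)
  ultimately show "inverse x \<in> A * B"
    unfolding x_inv by auto
qed

lemma subset_set_times_left: "1 \<in> B \<Longrightarrow> A \<subseteq> A * (B :: 'a::monoid_mult set)"
  using set_times_intro[of _ A 1 B] by auto

lemma subset_set_times_right: "1 \<in> A \<Longrightarrow> B \<subseteq> A * (B :: 'a::monoid_mult set)"
  using set_times_intro[of 1 A _ B] by auto

lemma normalizes_Diff_zero:
  "0 \<notin> M \<Longrightarrow> normalizes M N \<Longrightarrow> normalizes M (N - {0 :: 'a::division_ring})"
  by (auto simp: normalizes_def)

lemma normalizes_mono: "N \<subseteq> M \<Longrightarrow> normalizes M A \<Longrightarrow> normalizes N A"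
  by (auto simp: normalizes_def)

lemma normalizes_set_times:
  fixes M A B :: "'a::division_ring set"
  assumes "normalizes M A" "normalizes M B"
  shows "normalizes M (A * B)"
  unfolding normalizes_def
proof (intro ballI)
  fix m x assume "m \<in> M" "x \<in> A * B"
  then obtain a b where x: "x = a * b" "a \<in> A" "b \<in> B"
    by (auto elim!: set_times_elim)
  show "m * x * inverse m \<in> A * B"
  proof -
    have "m * x * inverse m = (m * a * inverse m) * (m * b * inverse m)"
      by (cases "m = 0") (simp_all add: x mult.assoc, simp add: mult.assoc[symmetric])
    then show ?thesis
      using assms \<open>m \<in> M\<close> x by (auto simp: normalizes_def)
  qed
qed

lemma set_times_normalizes:
  fixes K M A :: "'a::division_ring set"
  assumes "normalizes K A" "normalizes M A"
  shows "normalizes (K * M) A"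
  unfolding normalizes_def
proof (intro ballI)
  fix d a assume "d \<in> K * M" "a \<in> A"
  then obtain k m where d: "d = k * m" "k \<in> K" "m \<in> M"
    by (auto elim!: set_times_elim)
  have "d * a * inverse d = k * (m * a * inverse m) * inverse k"
    by (cases "k = 0 \<or> m = 0") (auto simp: d nonzero_inverse_mult_distrib mult.assoc)
  then show "d * a * inverse d \<in> A"
    using assms d \<open>a \<in> A\<close> by (simp add: normalizes_def)
qed

lemma normalizes_commutant: "normalizes (commutant A - {0}) (A :: 'a::division_ring set)"
  by (auto simp: normalizes_def commutant_def mult.assoc)

lemma normalizes_bicommutant:
  fixes M A :: "'a::division_ring set"
  assumes "normalizes M A"
  shows "normalizes M (commutant (commutant A))"
  unfolding normalizes_def
proof (intro ballI)
  fix m z assume m: "m \<in> M" and z: "z \<in> commutant (commutant A)"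
  show "m * z * inverse m \<in> commutant (commutant A)"
  proof (cases "m = 0")
    case False
    show ?thesis
      unfolding commutant_iff
    proof
      fix w assume w: "w \<in> commutant A"
      have "inverse m * w * m \<in> commutant A"
        unfolding commutant_iff
      proof
        fix a assume "a \<in> A"
        then have "m * a * inverse m \<in> A"
          using assms m by (simp add: normalizes_def)
        then have "w * (m * a * inverse m) = (m * a * inverse m) * w"
          using w by (simp add: commutant_def)
        moreover have "inverse m * w * m * a = inverse m * (w * (m * a * inverse m)) * m"
          using False by (simp add: mult.assoc)
        ultimately have "inverse m * w * m * a = inverse m * ((m * a * inverse m) * w) * m"
          by simp
        also have "\<dots> = a * (inverse m * w * m)"
          using False by (simp add: mult.assoc[symmetric])
        finally show "inverse m * w * m * a = a * (inverse m * w * m)" .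
      qed
      then have "z * (inverse m * w * m) = (inverse m * w * m) * z"
        using z by (simp add: commutant_def)
      moreover have "m * z * inverse m * w = m * (z * (inverse m * w * m)) * inverse m"
        using False by (simp add: mult.assoc)
      ultimately have "m * z * inverse m * w = m * ((inverse m * w * m) * z) * inverse m"
        by simp
      also have "\<dots> = w * (m * z * inverse m)"
        using False by (simp add: mult.assoc[symmetric])
      finally show "m * z * inverse m * w = w * (m * z * inverse m)" .
    qed
  qed simp
qed

lemma set_times_bicommutant_normalizes:
  fixes M A :: "'a::division_ring set"
  assumes "A \<subseteq> commutant A" "normalizes M A"
  shows "normalizes ((commutant (commutant A) - {0}) * M) A"
proof -
  have "commutant (commutant A) - {0} \<subseteq> commutant A - {0}"
    using commutant_antimono[OF assms(1)] by blast
  then show ?thesis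
    using normalizes_mono[OF _ normalizes_commutant] assms(2) by (blast intro: set_times_normalizes)
qed

subsection \<open>Abelian normal subgroups\<close>

lemma abelian_normal_one: "mult_subgroup M \<Longrightarrow> abelian_normal M {1}"
  by (auto simp: abelian_normal_def mult_subgroup_def normalizes_def commutant_def) (metis right_inverse)

lemma abelian_normal_set_times:
  fixes M A B :: "'a::division_ring set"
  assumes M: "mult_subgroup M" and A: "abelian_normal M A" and B: "abelian_normal M B"
    and "A \<subseteq> commutant B"
  shows "abelian_normal M (A * B)"
proof -
  have sub: "A \<subseteq> M" "B \<subseteq> M" and norm: "normalizes M A" "normalizes M B"
    and ab: "A \<subseteq> commutant A" "B \<subseteq> commutant B"
    using A B by (simp_all add: abelian_normal_def)
  have "mult_subgroup (A * B)"
    using A B normalizes_mono[OF sub(2) norm(1)] by (simp add: abelian_normal_def mult_subgroup_set_times)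
  moreover have "A * B \<subseteq> M"
  proof
    fix x assume "x \<in> A * B"
    then obtain a b where "x = a * b" "a \<in> A" "b \<in> B"
      by (auto elim!: set_times_elim)
    then show "x \<in> M"
      using M sub by (auto simp: mult_subgroup_def)
  qed
  moreover have "normalizes M (A * B)"
    using norm by (simp add: normalizes_set_times)
  moreover have "A * B \<subseteq> commutant (A * B)"
  proof -
    have "A \<union> B \<subseteq> commutant (A \<union> B)"
      using ab \<open>A \<subseteq> commutant B\<close> subset_commutant_iff[of B A] by (auto simp: commutant_Un)
    then have "A * B \<subseteq> commutant (A \<union> B)"
      by (simp add: set_times_subset_commutant)
    then have "A \<union> B \<subseteq> commutant (A * B)"
      by (simp only: subset_commutant_iff)
    then show ?thesis
      by (simp add: set_times_subset_commutant)
  qed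
  ultimately show ?thesis
    by (simp add: abelian_normal_def)
qed

lemma abelian_normal_Union_chain:
  fixes M :: "'a::division_ring set"
  assumes "\<C> \<noteq> {}" "subset.chain {N. abelian_normal M N} \<C>"
  shows "abelian_normal M (\<Union>\<C>)"
proof -
  have members: "abelian_normal M N" if "N \<in> \<C>" for N
    using assms(2) that by (auto simp: subset_chain_def)
  have common: "\<exists>N\<in>\<C>. x \<in> N \<and> y \<in> N" if "x \<in> \<Union>\<C>" "y \<in> \<Union>\<C>" for x y
    using that assms(2) unfolding subset_chain_def by blast
  obtain N0 where "N0 \<in> \<C>"
    using assms(1) by blast
  show ?thesis
    unfolding abelian_normal_def mult_subgroup_def normalizes_def commutant_def
  proof (intro conjI ballI subsetI CollectI)
    show "0 \<notin> \<Union>\<C>" "1 \<in> \<Union>\<C>"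
      using members \<open>N0 \<in> \<C>\<close> by (fastforce simp: abelian_normal_def mult_subgroup_def)+
  next
    fix x assume "x \<in> \<Union>\<C>"
    then obtain N where N: "N \<in> \<C>" "x \<in> N"
      by blast
    then show "x \<in> M" "inverse x \<in> \<Union>\<C>"
      using members[OF N(1)] by (auto simp: abelian_normal_def mult_subgroup_def)
    fix m assume "m \<in> M"
    then show "m * x * inverse m \<in> \<Union>\<C>"
      using members[OF N(1)] N by (auto simp: abelian_normal_def normalizes_def)
  next
    fix x y assume "x \<in> \<Union>\<C>" "y \<in> \<Union>\<C>"
    then obtain N where N: "N \<in> \<C>" "x \<in> N" "y \<in> N"
      using common by blast
    then show "x * y \<in> \<Union>\<C>" "x * y = y * x"
      using members[OF N(1)] by (auto simp: abelian_normal_def mult_subgroup_def commutant_def)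
  qed
qed

lemma abelian_normal_bicommutant:
  fixes M A :: "'a::division_ring set"
  assumes M: "mult_subgroup M" and A: "abelian_normal M A"
    and sub: "commutant (commutant A) - {0} \<subseteq> M"
  shows "abelian_normal M (commutant (commutant A) - {0})"
proof -
  have "A \<subseteq> commutant A" "normalizes M A" "0 \<notin> M"
    using M A by (simp_all add: abelian_normal_def mult_subgroup_def)
  then have "normalizes M (commutant (commutant A) - {0})"
    by (simp add: normalizes_Diff_zero normalizes_bicommutant)
  moreover have "commutant (commutant A) - {0} \<subseteq> commutant (commutant (commutant A) - {0})"
    using commutative_bicommutant[OF \<open>A \<subseteq> commutant A\<close>]
      commutant_antimono[of "commutant (commutant A) - {0}" "commutant (commutant A)"]
    by blast
  ultimately show ?thesis
    using sub by (simp add: abelian_normal_def mult_subgroup_commutant)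
qed

lemma ex_maximal_abelian_normal:
  fixes M :: "'a::division_ring set"
  assumes "mult_subgroup M"
  shows "\<exists>A. maximal_abelian_normal mult_units M A"
proof -
  have "\<exists>A\<in>{N. abelian_normal M N}. \<forall>N\<in>{N. abelian_normal M N}. A \<subseteq> N \<longrightarrow> N = A"
    using abelian_normal_one[OF assms] abelian_normal_Union_chain
    by (intro subset_Zorn_nonempty) auto
  then show ?thesis
    by (auto simp: maximal_abelian_normal_mult_units_iff[OF assms])
qed

lemma mult_subgroup_if_maximal_subgroup: "maximal_subgroup mult_units M \<Longrightarrow> mult_subgroup M"
  by (simp add: maximal_subgroup_def subgroup_mult_units_iff)

lemma maximal_abelian_normal_central_or_closed_add_one:
  fixes M A :: "'a::division_ring set"
  assumes max: "maximal_subgroup mult_units M" and "maximal_abelian_normal mult_units M A"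
  shows "commutant A = UNIV \<or> (\<forall>x\<in>A. x + 1 \<noteq> 0 \<longrightarrow> x + 1 \<in> A)"
proof -
  have M: "mult_subgroup M"
    using max by (rule mult_subgroup_if_maximal_subgroup)
  have A: "abelian_normal M A" and A_max: "\<forall>N. abelian_normal M N \<and> A \<subseteq> N \<longrightarrow> N = A"
    using assms(2) by (simp_all add: maximal_abelian_normal_mult_units_iff[OF M])
  then have A_ab: "A \<subseteq> commutant A" and A_norm: "normalizes M A"
    by (simp_all add: abelian_normal_def)
  define K where "K = commutant (commutant A) - {0}"
  have K: "mult_subgroup K"
    by (simp add: K_def mult_subgroup_commutant)
  have "normalizes M K"
    using M A_norm by (simp add: K_def mult_subgroup_def normalizes_Diff_zero normalizes_bicommutant)
  then have "mult_subgroup (K * M)"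
    using K M by (simp add: mult_subgroup_set_times)
  moreover have "M \<subseteq> K * M"
    using K by (simp add: mult_subgroup_def subset_set_times_right)
  ultimately consider "K * M = M" | "K * M = {x. x \<noteq> 0}"
    using maximal_subgroup_mult_units_cases[OF max] by blast
  then show ?thesis
  proof cases
    case 1
    then have "K \<subseteq> M"
      using M subset_set_times_left[of M K] by (simp add: mult_subgroup_def)
    then have "abelian_normal M K"
      using M A by (simp add: K_def abelian_normal_bicommutant)
    moreover have "A \<subseteq> K"
      using A subset_bicommutant[of A] by (auto simp: K_def abelian_normal_def mult_subgroup_def)
    ultimately have "K = A"
      using A_max by blast
    moreover have "\<forall>x\<in>K. x + 1 \<noteq> 0 \<longrightarrow> x + 1 \<in> K"
      by (simp add: K_def add_mem_commutant)
    ultimately show ?thesis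
      by blast
  next
    case 2
    have "normalizes {x. x \<noteq> 0} A"
      using set_times_bicommutant_normalizes[OF A_ab A_norm] by (simp add: K_def[symmetric] 2)
    then have "x \<in> commutant A" for x
      using A_ab by (intro mem_commutant_if_normalizes) auto
    then show ?thesis
      by blast
  qed
qed

lemma maximal_abelian_normal_unique:
  fixes M A B :: "'a::division_ring set"
  assumes max: "maximal_subgroup mult_units M"
    and "maximal_abelian_normal mult_units M A" "maximal_abelian_normal mult_units M B"
  shows "A = B"
proof -
  have M: "mult_subgroup M"
    using max by (rule mult_subgroup_if_maximal_subgroup)
  have A: "abelian_normal M A" and A_max: "\<forall>N. abelian_normal M N \<and> A \<subseteq> N \<longrightarrow> N = A"
    and B: "abelian_normal M B" and B_max: "\<forall>N. abelian_normal M N \<and> B \<subseteq> N \<longrightarrow> N = B"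
    using assms(2,3) by (simp_all add: maximal_abelian_normal_mult_units_iff[OF M])
  have "A \<subseteq> commutant B"
    using maximal_abelian_normal_central_or_closed_add_one[OF max assms(2)]
  proof
    assume "commutant A = UNIV"
    then show ?thesis
      using subset_commutant_iff[of A B] by simp
  next
    assume closed: "\<forall>x\<in>A. x + 1 \<noteq> 0 \<longrightarrow> x + 1 \<in> A"
    show ?thesis
    proof
      fix x assume "x \<in> A"
      then have "x \<in> insert 0 M" "x + 1 \<in> insert 0 M"
        using A closed by (auto simp: abelian_normal_def)
      then show "x \<in> commutant B"
        using B by (intro mem_commutant_if_normalizes) (auto simp: abelian_normal_def)
    qed
  qed
  then have AB: "abelian_normal M (A * B)"
    using M A B by (simp add: abelian_normal_set_times)
  have "1 \<in> A" "1 \<in> B"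
    using A B by (simp_all add: abelian_normal_def mult_subgroup_def)
  then have "A \<subseteq> A * B" "B \<subseteq> A * B"
    by (simp_all add: subset_set_times_left subset_set_times_right)
  then show "A = B"
    using A_max B_max AB by metis
qed

theorem proposition2p4:
  fixes M :: "('a::division_ring) set"
  assumes noncomm: "\<exists>a b :: 'a. a * b \<noteq> b * a"
    and max: "maximal_subgroup mult_units M"
    and nonab: "\<not> abelian_set mult_units M"
    and locsolv: "locally_solvable mult_units M"
  shows "\<exists>!N. maximal_abelian_normal mult_units M N"
proof (rule ex_ex1I)
  show "\<exists>N. maximal_abelian_normal mult_units M N"
    using max by (simp add: ex_maximal_abelian_normal mult_subgroup_if_maximal_subgroup)
next
  show "N = N'" if "maximal_abelian_normal mult_units M N" "maximal_abelian_normal mult_units M N'" for N N'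
    using maximal_abelian_normal_unique[OF max that] .
qed

end
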